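(* Let $E$ be a Banach lattice, $u_0\in E^+$, $\delta>0$, and let $D\subseteq (E^* )^+$ be such that $\langle u_0,x^*\rangle\ge\delta$ for all $x^*\in D$. If $D$ is almost order bounded with respect to $\rho_{u_0}$, then there exists $M\in\mathbb N$ such that every set of mutually disjoint elements of $D$ contains at most $M$ elements.
   Context: For $u_0\in E$, $\rho_{u_0}$ is the Riesz seminorm on $E^*$ given by $\rho_{u_0}(x^* )=\langle |u_0|,|x^*|\rangle$, and $B_{\rho_{u_0}}=\{x^*\in E^*:\rho_{u_0}(x^* )\le 1\}$. A set $D\subseteq E^*$ is almost order bounded with respect to $\rho_{u_0}$ if for every $\varepsilon>0$ there exists $y^*\in (E^* )^+$ with $D\subseteq[-y^*,y^*]+\varepsilon B_{\rho_{u_0}}$. *)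

theory Defs
  imports "HOL-Analysis.Analysis"
begin

definition labs :: "'a::{uminus,sup} \<Rightarrow> 'a" where
  "labs x = sup x (- x)"

class banach_lattice = banach + ordered_real_vector + lattice +
  assumes lattice_norm: "sup x (- x) \<le> sup y (- y) \<Longrightarrow> norm x \<le> norm y"

text \<open>The dual E^* is represented by bounded linear functionals E \<Rightarrow> real.
Its order is the pointwise order on the positive cone.\<close>

definition dual_pos :: "('a::banach_lattice \<Rightarrow> real) \<Rightarrow> bool" where
  "dual_pos f \<longleftrightarrow> bounded_linear f \<and> (\<forall>x. 0 \<le> x \<longrightarrow> 0 \<le> f x)"

definition dual_le :: "('a::banach_lattice \<Rightarrow> real) \<Rightarrow> ('a \<Rightarrow> real) \<Rightarrow> bool" where
  "dual_le f g \<longleftrightarrow> (\<forall>x. 0 \<le> x \<longrightarrow> f x \<le> g x)"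

text \<open>Modulus of a functional (Riesz--Kantorovich): for x \<ge> 0,
  |x^*|(x) = sup { |x^*(y)| : |y| \<le> x }.\<close>

definition dual_abs :: "('a::banach_lattice \<Rightarrow> real) \<Rightarrow> 'a \<Rightarrow> real" where
  "dual_abs f x = Sup {\<bar>f y\<bar> | y. labs y \<le> x}"

definition rho :: "'a::banach_lattice \<Rightarrow> ('a \<Rightarrow> real) \<Rightarrow> real" where
  "rho u0 f = dual_abs f (labs u0)"

text \<open>Infimum of two functionals (Riesz--Kantorovich): for u \<ge> 0,
  (x^* \<and> y^*)(u) = inf { x^*(v) + y^*(u - v) : 0 \<le> v \<le> u }.\<close>

definition dual_inf :: "('a::banach_lattice \<Rightarrow> real) \<Rightarrow> ('a \<Rightarrow> real) \<Rightarrow> 'a \<Rightarrow> real" where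
  "dual_inf f g u = Inf {f v + g (u - v) | v. 0 \<le> v \<and> v \<le> u}"

text \<open>Disjointness in E^*: |x^*| \<and> |y^*| = 0, i.e. it vanishes on the positive cone.\<close>

definition dual_disjoint :: "('a::banach_lattice \<Rightarrow> real) \<Rightarrow> ('a \<Rightarrow> real) \<Rightarrow> bool" where
  "dual_disjoint f g \<longleftrightarrow>
     (\<forall>u. 0 \<le> u \<longrightarrow> dual_inf (\<lambda>x. dual_abs f x) (\<lambda>x. dual_abs g x) u = 0)"

text \<open>D is almost order bounded w.r.t. rho_{u0}: for every \<epsilon> > 0 there is
y^* \<ge> 0 in E^* with D \<subseteq> [-y^*, y^*] + \<epsilon> B_rho.\<close>

definition almost_order_bounded ::
  "'a::banach_lattice \<Rightarrow> ('a \<Rightarrow> real) set \<Rightarrow> bool" where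
  "almost_order_bounded u0 D \<longleftrightarrow>
     (\<forall>\<epsilon>>0. \<exists>y. dual_pos y \<and>
        (\<forall>f\<in>D. \<exists>z w. bounded_linear z \<and> bounded_linear w \<and> f = (\<lambda>x. z x + w x) \<and>
            dual_le (\<lambda>x. - y x) z \<and> dual_le z y \<and> rho u0 w \<le> \<epsilon>))"

end

theory Submission
  imports Defs
begin

text \<open>Almost order boundedness with \<epsilon> = \<delta>/4 yields one positive y with f \<le> y + \<delta>/4 on the
  order interval [0, u0] for all f \<in> D. If f_1, \<dots>, f_n \<in> D are mutually disjoint, the
  Riesz--Kantorovich formula for f_i \<and> f_j = 0 lets us split u0 into positive pieces
  p_1 + \<dots> + p_n \<le> u0 with f_i(p_i) \<ge> f_i(u0) - \<delta>/4. Then y(p_i) \<ge> \<delta>/2 for every i,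
  hence n \<delta>/2 \<le> y(u0).\<close>

lemma labs_eq_self: "0 \<le> x \<Longrightarrow> labs x = (x::'a::{ordered_ab_group_add, lattice})"
  unfolding labs_def by (metis neg_le_0_iff_le order.trans sup.absorb1)

lemma dual_pos_mono: "dual_pos f \<Longrightarrow> x \<le> y \<Longrightarrow> f x \<le> f y"
  unfolding dual_pos_def by (metis diff_ge_0_iff_ge linear_simps(2))

lemma abs_le_dual_pos_labs:
  assumes "dual_pos f" shows "\<bar>f y\<bar> \<le> f (labs y)"
proof -
  have "f y \<le> f (labs y)" "f (- y) \<le> f (labs y)"
    using assms by (simp_all add: dual_pos_mono labs_def)
  moreover have "f (- y) = - f y"
    using assms by (simp add: dual_pos_def linear_simps)
  ultimately show ?thesis by linarith
qed

lemma dual_abs_dual_pos: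
  assumes "dual_pos f" "0 \<le> x" shows "dual_abs f x = f x"
  unfolding dual_abs_def
proof (rule cSup_eq_maximum)
  have "\<bar>f x\<bar> = f x" using assms by (simp add: dual_pos_def)
  then show "f x \<in> {\<bar>f y\<bar> |y. labs y \<le> x}"
    using labs_eq_self[OF assms(2)] by (metis (mono_tags, lifting) mem_Collect_eq order_refl)
next
  fix a assume "a \<in> {\<bar>f y\<bar> |y. labs y \<le> x}"
  then obtain y where "a = \<bar>f y\<bar>" "labs y \<le> x" by blast
  then show "a \<le> f x"
    using abs_le_dual_pos_labs[OF assms(1), of y] dual_pos_mono[OF assms(1)] by fastforce
qed

lemma dual_disjoint_approx_split:
  assumes "dual_disjoint f g" "dual_pos f" "dual_pos g" "0 \<le> u" "\<eta> > 0"
  obtains v where "0 \<le> v" "v \<le> u" "f v + g (u - v) < \<eta>"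
proof -
  let ?A = "{dual_abs f v + dual_abs g (u - v) | v. 0 \<le> v \<and> v \<le> u}"
  have "Inf ?A = 0" using assms(1,4) unfolding dual_disjoint_def dual_inf_def by simp
  moreover have "?A \<noteq> {}" using assms(4) by blast
  ultimately have "\<exists>a\<in>?A. a < \<eta>" using cInf_lessD[of ?A \<eta>] assms(5) by simp
  then obtain v where v: "0 \<le> v" "v \<le> u" "dual_abs f v + dual_abs g (u - v) < \<eta>" by blast
  moreover have "0 \<le> u - v" using v(2) by simp
  ultimately show thesis
    using that dual_abs_dual_pos[OF assms(2) v(1)] dual_abs_dual_pos[OF assms(3)] by simp
qed

text \<open>The new functional g takes from each piece p f the part where f is small and g is large,
  together with the remainder u - \<Sum>p.\<close>

lemma approx_partition_insert:
  assumes "finite S" "g \<notin> S" "dual_pos g" "\<forall>f\<in>S. dual_pos f \<and> dual_disjoint f g"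
    and "\<forall>f\<in>S. 0 \<le> p f" "sum p S \<le> u" "\<forall>f\<in>S. f u - \<eta> \<le> f (p f)" and "e > 0"
  obtains p' where "\<forall>f\<in>insert g S. 0 \<le> p' f" "sum p' (insert g S) = u"
    "\<forall>f\<in>S. f u - \<eta> - e \<le> f (p' f)" "g u - real (card S) * e \<le> g (p' g)"
proof -
  have "\<forall>f\<in>S. \<exists>v. 0 \<le> v \<and> v \<le> p f \<and> f v + g (p f - v) < e"
    using assms(3,4,5,8) dual_disjoint_approx_split by metis
  then obtain q where q: "\<And>f. f \<in> S \<Longrightarrow> 0 \<le> q f \<and> q f \<le> p f \<and> f (q f) + g (p f - q f) < e"
    by metis
  have g_small: "g (p f - q f) \<le> e" and f_small: "f (q f) \<le> e" if "f \<in> S" for f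
  proof -
    have "0 \<le> f (q f)" "0 \<le> g (p f - q f)"
      using assms(3,4) q[OF that] that by (auto simp: dual_pos_def)
    then show "g (p f - q f) \<le> e" "f (q f) \<le> e" using q[OF that] by auto
  qed
  have lin_g: "linear g" using assms(3) by (simp add: dual_pos_def bounded_linear.linear)
  define r where "r = u - sum p S"
  define p' where "p' = (\<lambda>f. if f = g then r + sum q S else p f - q f)"
  have p'_S: "sum p' S = (\<Sum>f\<in>S. p f - q f)"
    using assms(2) by (auto simp: p'_def intro!: sum.cong)
  have "\<forall>f\<in>insert g S. 0 \<le> p' f"
    using q assms(6) by (auto simp: p'_def r_def intro!: sum_nonneg add_nonneg_nonneg)
  moreover have "sum p' (insert g S) = u"
    using assms(1,2) p'_S by (simp add: p'_def sum_subtractf r_def)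
  moreover have "\<forall>f\<in>S. f u - \<eta> - e \<le> f (p' f)"
  proof
    fix f assume "f \<in> S"
    then have "f (p' f) = f (p f) - f (q f)"
      using assms(2,4) by (auto simp: p'_def dual_pos_def linear_simps)
    then show "f u - \<eta> - e \<le> f (p' f)" using assms(7) f_small \<open>f \<in> S\<close> by fastforce
  qed
  moreover have "g u - real (card S) * e \<le> g (p' g)"
  proof -
    have "g u = g r + (\<Sum>f\<in>S. g (q f)) + (\<Sum>f\<in>S. g (p f - q f))"
      by (simp add: r_def linear_diff[OF lin_g] linear_sum[OF lin_g] sum_subtractf)
    also have "(\<Sum>f\<in>S. g (p f - q f)) \<le> real (card S) * e"
      using sum_mono[of S _ "\<lambda>_. e"] g_small by simp
    also have "g r + (\<Sum>f\<in>S. g (q f)) = g (p' g)"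
      by (simp add: p'_def linear_add[OF lin_g] linear_sum[OF lin_g])
    finally show ?thesis by simp
  qed
  ultimately show thesis using that by blast
qed

lemma dual_disjoint_approx_partition:
  assumes "finite S" "\<forall>f\<in>S. dual_pos f" "pairwise dual_disjoint S" "0 \<le> u" "\<eta> > 0"
  shows "\<exists>p. (\<forall>f\<in>S. 0 \<le> p f) \<and> sum p S \<le> u \<and> (\<forall>f\<in>S. f u - \<eta> \<le> f (p f))"
  using assms
proof (induction S arbitrary: \<eta> rule: finite_induct)
  case empty
  then show ?case by (intro exI[of _ "\<lambda>_. 0"]) simp
next
  case (insert g S)
  define e where "e = \<eta> / (2 * (real (card S) + 1))"
  have "e > 0" "e \<le> \<eta> / 2" "real (card S) * e \<le> \<eta>"
    using insert.prems(4) by (auto simp: e_def field_simps)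
  have "\<forall>f\<in>S. dual_pos f" "pairwise dual_disjoint S" "\<eta> / 2 > 0"
    using insert.prems pairwise_subset[OF insert.prems(2)] by auto
  then obtain p where "\<forall>f\<in>S. 0 \<le> p f" "sum p S \<le> u" "\<forall>f\<in>S. f u - \<eta> / 2 \<le> f (p f)"
    using insert.IH insert.prems(3) by blast
  moreover have "\<forall>f\<in>S. dual_pos f \<and> dual_disjoint f g"
    using insert.prems(1,2) insert.hyps(2) by (auto simp: pairwise_def)
  ultimately obtain p' where p': "\<forall>f\<in>insert g S. 0 \<le> p' f" "sum p' (insert g S) = u"
    "\<forall>f\<in>S. f u - \<eta> / 2 - e \<le> f (p' f)" "g u - real (card S) * e \<le> g (p' g)"
    using approx_partition_insert[OF insert.hyps] insert.prems(1) \<open>e > 0\<close> by (metis insertCI)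
  have "\<forall>f\<in>insert g S. f u - \<eta> \<le> f (p' f)"
    using p'(3,4) \<open>e \<le> \<eta> / 2\<close> \<open>real (card S) * e \<le> \<eta>\<close> by force
  then show ?case using p'(1,2) by auto
qed

lemma le_rho:
  assumes "bounded_linear w" "0 \<le> v" "v \<le> u0"
  shows "w v \<le> rho u0 w"
proof -
  obtain K where K: "\<And>x. norm (w x) \<le> norm x * K" "K > 0"
    using bounded_linear.pos_bounded[OF assms(1)] by blast
  have labs_u0: "labs u0 = u0" and labs_v: "labs v = v"
    using assms(2,3) labs_eq_self order.trans by blast+
  let ?A = "{\<bar>w y\<bar> |y. labs y \<le> labs u0}"
  have "bdd_above ?A"
  proof (rule bdd_aboveI)
    fix a assume "a \<in> ?A"
    then obtain y where y: "a = \<bar>w y\<bar>" "labs y \<le> labs u0" by blast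
    have "norm y \<le> norm u0" using lattice_norm y(2) unfolding labs_def by blast
    moreover have "\<bar>w y\<bar> \<le> norm y * K" using K(1)[of y] by simp
    ultimately show "a \<le> norm u0 * K"
      using K(2) y(1) mult_right_mono[of "norm y" "norm u0" K] by linarith
  qed
  moreover have "\<bar>w v\<bar> \<in> ?A" using labs_u0 labs_v assms(3) by force
  ultimately have "\<bar>w v\<bar> \<le> Sup ?A" by (rule cSup_upper[rotated])
  then show ?thesis unfolding rho_def dual_abs_def by linarith
qed

lemma almost_order_bounded_dominated:
  assumes "almost_order_bounded u0 D" "\<epsilon> > 0"
  obtains y where "dual_pos y" "\<And>f v. f \<in> D \<Longrightarrow> 0 \<le> v \<Longrightarrow> v \<le> u0 \<Longrightarrow> f v \<le> y v + \<epsilon>"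
proof -
  obtain y where "dual_pos y" and decomp: "\<forall>f\<in>D. \<exists>z w. bounded_linear z \<and> bounded_linear w \<and>
      f = (\<lambda>x. z x + w x) \<and> dual_le (\<lambda>x. - y x) z \<and> dual_le z y \<and> rho u0 w \<le> \<epsilon>"
    using assms(1)[unfolded almost_order_bounded_def, rule_format, OF assms(2)] by (elim exE conjE)
  have "f v \<le> y v + \<epsilon>" if "f \<in> D" "0 \<le> v" "v \<le> u0" for f v
  proof -
    obtain z w where "bounded_linear w" "f = (\<lambda>x. z x + w x)" "dual_le z y" "rho u0 w \<le> \<epsilon>"
      using decomp \<open>f \<in> D\<close> by blast
    moreover have "z v \<le> y v" using \<open>dual_le z y\<close> \<open>0 \<le> v\<close> by (simp add: dual_le_def)
    ultimately show ?thesis using le_rho[of w v u0] that(2,3) by simp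
  qed
  with \<open>dual_pos y\<close> show thesis using that by blast
qed

lemma card_dual_disjoint_le:
  assumes "finite S" "\<forall>f\<in>S. dual_pos f" "pairwise dual_disjoint S" "0 \<le> u0" "\<epsilon> > 0"
    and "\<forall>f\<in>S. \<delta> \<le> f u0" and "dual_pos y"
    and "\<And>f v. f \<in> S \<Longrightarrow> 0 \<le> v \<Longrightarrow> v \<le> u0 \<Longrightarrow> f v \<le> y v + \<epsilon>"
  shows "real (card S) * (\<delta> - 2 * \<epsilon>) \<le> y u0"
proof -
  obtain p where p: "\<forall>f\<in>S. 0 \<le> p f" "sum p S \<le> u0" "\<forall>f\<in>S. f u0 - \<epsilon> \<le> f (p f)"
    using dual_disjoint_approx_partition[OF assms(1-5)] by blast
  have "\<delta> - 2 * \<epsilon> \<le> y (p f)" if "f \<in> S" for f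
  proof -
    have "sum p S = p f + sum p (S - {f})" using sum.remove[OF assms(1) that] .
    moreover have "0 \<le> sum p (S - {f})" using p(1) by (intro sum_nonneg) auto
    ultimately have "p f \<le> sum p S" by simp
    then have "p f \<le> u0" using p(2) by (rule order.trans)
    then have "f (p f) \<le> y (p f) + \<epsilon>" using assms(8) p(1) that by blast
    moreover have "\<delta> \<le> f u0" "f u0 - \<epsilon> \<le> f (p f)" using assms(6) p(3) that by blast+
    ultimately show ?thesis by linarith
  qed
  then have "real (card S) * (\<delta> - 2 * \<epsilon>) \<le> (\<Sum>f\<in>S. y (p f))"
    using sum_mono[of S "\<lambda>_. \<delta> - 2 * \<epsilon>"] by simp
  also have "\<dots> = y (sum p S)"
    using assms(7) by (simp add: dual_pos_def linear_sum bounded_linear.linear)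
  also have "\<dots> \<le> y u0" using dual_pos_mono[OF assms(7) p(2)] .
  finally show ?thesis .
qed

theorem corollary3p5:
  fixes u0 :: "'a::banach_lattice" and \<delta> :: real and D :: "('a \<Rightarrow> real) set"
  assumes "0 \<le> u0"
    and "\<delta> > 0"
    and "\<forall>f\<in>D. dual_pos f"
    and "\<forall>f\<in>D. f u0 \<ge> \<delta>"
    and "almost_order_bounded u0 D"
  shows "\<exists>M::nat. \<forall>S. S \<subseteq> D \<and> pairwise dual_disjoint S \<longrightarrow> finite S \<and> card S \<le> M"
proof -
  have "\<delta> / 4 > 0" using assms(2) by simp
  then obtain y where y: "dual_pos y"
    "\<And>f v. f \<in> D \<Longrightarrow> 0 \<le> v \<Longrightarrow> v \<le> u0 \<Longrightarrow> f v \<le> y v + \<delta> / 4"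
    using almost_order_bounded_dominated[OF assms(5)] by blast
  define M where "M = nat \<lceil>2 * y u0 / \<delta>\<rceil>"
  have card_le: "card T \<le> M" if "T \<subseteq> D" "finite T" "pairwise dual_disjoint T" for T
  proof -
    have "\<forall>f\<in>T. dual_pos f" "\<forall>f\<in>T. \<delta> \<le> f u0" using assms(3,4) that(1) by auto
    moreover have "\<And>f v. f \<in> T \<Longrightarrow> 0 \<le> v \<Longrightarrow> v \<le> u0 \<Longrightarrow> f v \<le> y v + \<delta> / 4"
      using y(2) that(1) by blast
    ultimately have "real (card T) * (\<delta> - 2 * (\<delta> / 4)) \<le> y u0"
      using card_dual_disjoint_le[OF that(2) _ that(3) assms(1) \<open>\<delta> / 4 > 0\<close> _ y(1)] by presburger
    then have "real (card T) \<le> 2 * y u0 / \<delta>" using assms(2) by (simp add: field_simps)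
    then have "real (card T) \<le> real M" unfolding M_def using real_nat_ceiling_ge order.trans by blast
    then show ?thesis by simp
  qed
  have "finite S \<and> card S \<le> M" if "S \<subseteq> D" "pairwise dual_disjoint S" for S
  proof (rule finite_if_finite_subsets_card_bdd)
    fix T assume "T \<subseteq> S" "finite T"
    then show "card T \<le> M" using card_le[of T] that pairwise_subset[OF that(2)] by blast
  qed
  then show ?thesis by blast
qed

end
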